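(* Fix $\varepsilon>0$ and a request sequence in which every request has infinite duration. For a VNF $v$, a node $i$ and a latency range $L_j$, let $\Lambda^v_{i,j}$ be the total load of all jobs $(r,v)$ associated with $L_j$ that c-REShare$(\varepsilon)$ handles in node $i$. Then the number of VMs used by c-REShare$(\varepsilon)$ to handle $\Lambda^v_{i,j}$ is at most $\frac{2\Lambda^v_{i,j}}{\lambda_{\min}(1+\varepsilon)^j}+1$.
   Context: Network: a layered graph of nodes (datacenters); a node is at layer $\ell\ge0$ if its distance from the closest leaf is $\ell$. Every node can host arbitrarily many virtual machines (VMs). Each VM $b$ runs exactly one VNF $v$ from a finite set $\mathcal V$, has maximum computing capability $\bar\mu>0$ and allocated capability $\mu_b\le\bar\mu$. Each VNF $v$ has complexity $\theta_v\in(0,1]$. Requests: requests $r$ arrive online; each has a set $\mathcal V_r\subseteq\mathcal V$ of VNFs, arrival time, duration $\tau_r$, traffic load $\lambda_r\ge\lambda_{\min}$ where $\lambda_{\min}=\inf_r\lambda_r>0$ is known in advance, end-to-end delay target $D_r$. For $v\in\mathcal V_r$, $(r,v)$ is a job. For a VM $b$ running $v$, $\Lambda(b)$ is the total load of the jobs on $b$, and each job on $b$ experiences processing latency $1/(\mu_b-\theta_v\Lambda(b))$. Forwarding latency from a leaf to layer $\ell$ is $d_\ell$, strictly increasing in $\ell$. Fair delay allocation: $M_{r,v}=1/(\bar\mu-\theta_v\lambda_r)$; $\ell^*(r)$ is the highest layer $\ell$ with $d_\ell+\sum_{v\in\mathcal V_r}M_{r,v}\le D_r$; $D_r^v=\frac{M_{r,v}}{\sum_{u\in\mathcal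 V_r}M_{r,u}}(D_r-d_{\ell^*(r)})$. Latency ranges: for $\varepsilon>0$, $L_0=[\frac{1}{\bar\mu-\lambda_{\min}},\frac{1}{\bar\mu-\lambda_{\min}(1+\varepsilon)}]$, $L_j=(\frac{1}{\bar\mu-\lambda_{\min}(1+\varepsilon)^j},\frac{1}{\bar\mu-\lambda_{\min}(1+\varepsilon)^{j+1}}]$ for $j\ge1$ (indices with $\lambda_{\min}(1+\varepsilon)^{j+1}<\bar\mu$); job $(r,v)$ is associated with $L_j$ if $D_r^v\in L_j$. Algorithm c-REShare$(\varepsilon)$: on arrival of $r$, compute $\ell^*(r)$ and choose a node $i^*$ at layer $\ell^*(r)$. For each $v\in\mathcal V_r$, with $j$ such that $D_r^v\in L_j$: a VM $b$ in $i^*$ running $v$ and hosting jobs associated with $L_j$ is viable if $\frac{1}{\bar\mu-\theta_v(\Lambda(b)+\lambda_r)}\le D_r^v$ and $\frac{1}{\bar\mu-\theta_v(\Lambda(b)+\lambda_r)}\le D_{r'}^v$ for every job $(r',v)$ already on $b$. If viable VMs exist, $(r,v)$ is placed on the viable VM with the largest $\Lambda(b)$, whose capability is set to $\theta_v\Lambda(b)+1/\min_{(r',v)\in b}D_{r'}^v$ (including the new job); otherwise a new VM running $v$ is opened in $i^*$ with capability $\theta_v\lambda_r+1/D_r^v$ and $(r,v)$ is placed on it. *)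

theory Defs
  imports Complex_Main
begin

text \<open>Static parameters of the network and of the VNFs.  The layered graph is only
  used through the layer of each node, so it is represented by the (finite) set of
  nodes and the layer function.\<close>

record ('n, 'v) sys =
  nodes :: "'n set"
  layer :: "'n \<Rightarrow> nat"
  fwd   :: "nat \<Rightarrow> real"       \<comment> \<open>forwarding latency d_l from a leaf to layer l\<close>
  cplx  :: "'v \<Rightarrow> real"
  mubar :: real                \<comment> \<open>maximum computing capability of a VM\<close>
  lmin  :: real

text \<open>A request (infinite duration; arrival order is the index in the request
  sequence).\<close>

record 'v req =
  vnfs   :: "'v set"
  load   :: real
  target :: real

text \<open>A VM: hosting node, VNF it runs, latency range index of its jobs,
  allocated capability, and its jobs, each given by (load, delay budget D_r^v).\<close>

record ('n, 'v) vm =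
  vm_node  :: 'n
  vm_vnf   :: 'v
  vm_range :: nat
  vm_cap   :: real
  vm_jobs  :: "(real \<times> real) list"

definition vm_load :: "('n, 'v) vm \<Rightarrow> real" where
  "vm_load b = sum_list (map fst (vm_jobs b))"

definition Mrv :: "('n, 'v) sys \<Rightarrow> 'v req \<Rightarrow> 'v \<Rightarrow> real" where
  "Mrv s r v = 1 / (mubar s - cplx s v * load r)"

definition sumM :: "('n, 'v) sys \<Rightarrow> 'v req \<Rightarrow> real" where
  "sumM s r = (\<Sum>u\<in>vnfs r. Mrv s r u)"

definition feasible_layers :: "('n, 'v) sys \<Rightarrow> 'v req \<Rightarrow> nat set" where
  "feasible_layers s r = {l \<in> layer s ` nodes s. fwd s l + sumM s r \<le> target r}"

definition lstar :: "('n, 'v) sys \<Rightarrow> 'v req \<Rightarrow> nat" where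
  "lstar s r = Max (feasible_layers s r)"

definition Drv :: "('n, 'v) sys \<Rightarrow> 'v req \<Rightarrow> 'v \<Rightarrow> real" where
  "Drv s r v = Mrv s r v / sumM s r * (target r - fwd s (lstar s r))"

definition in_range :: "('n, 'v) sys \<Rightarrow> real \<Rightarrow> nat \<Rightarrow> real \<Rightarrow> bool" where
  "in_range s eps j x \<longleftrightarrow>
     lmin s * (1 + eps) ^ (j + 1) < mubar s \<and>
     (if j = 0 then 1 / (mubar s - lmin s) \<le> x
      else 1 / (mubar s - lmin s * (1 + eps) ^ j) < x) \<and>
     x \<le> 1 / (mubar s - lmin s * (1 + eps) ^ (j + 1))"

text \<open>The latency 1/(mubar - theta(Lambda+lam)) is only meaningful (finite) when the
  denominator is positive, which is required explicitly.\<close>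

definition viable ::
  "('n, 'v) sys \<Rightarrow> 'n \<Rightarrow> 'v \<Rightarrow> nat \<Rightarrow> real \<Rightarrow> real \<Rightarrow> ('n, 'v) vm \<Rightarrow> bool" where
  "viable s i v j lam D b \<longleftrightarrow>
     vm_node b = i \<and> vm_vnf b = v \<and> vm_range b = j \<and>
     0 < mubar s - cplx s v * (vm_load b + lam) \<and>
     1 / (mubar s - cplx s v * (vm_load b + lam)) \<le> D \<and>
     (\<forall>(l', D')\<in>set (vm_jobs b). 1 / (mubar s - cplx s v * (vm_load b + lam)) \<le> D')"

definition add_job :: "('n, 'v) sys \<Rightarrow> real \<Rightarrow> real \<Rightarrow> ('n, 'v) vm \<Rightarrow> ('n, 'v) vm" where
  "add_job s lam D b =
     (let js = vm_jobs b @ [(lam, D)] in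
      b\<lparr>vm_jobs := js,
        vm_cap := cplx s (vm_vnf b) * sum_list (map fst js) + 1 / Min (snd ` set js)\<rparr>)"

definition new_vm :: "('n, 'v) sys \<Rightarrow> 'n \<Rightarrow> 'v \<Rightarrow> nat \<Rightarrow> real \<Rightarrow> real \<Rightarrow> ('n, 'v) vm" where
  "new_vm s i v j lam D =
     \<lparr>vm_node = i, vm_vnf = v, vm_range = j,
      vm_cap = cplx s v * lam + 1 / D, vm_jobs = [(lam, D)]\<rparr>"

text \<open>Placement of one job (node i, VNF v, range j, load lam, budget D) into the
  current list of VMs.  Ties among viable VMs of maximal load are broken arbitrarily
  (nondeterministically).\<close>

definition place_job ::
  "('n, 'v) sys \<Rightarrow> ('n, 'v) vm list \<Rightarrow> 'n \<Rightarrow> 'v \<Rightarrow> nat \<Rightarrow> real \<Rightarrow> real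
     \<Rightarrow> ('n, 'v) vm list \<Rightarrow> bool" where
  "place_job s S i v j lam D S' \<longleftrightarrow>
     (\<exists>k < length S. viable s i v j lam D (S ! k) \<and>
        (\<forall>k' < length S. viable s i v j lam D (S ! k') \<longrightarrow> vm_load (S ! k') \<le> vm_load (S ! k)) \<and>
        S' = S[k := add_job s lam D (S ! k)])
   \<or> ((\<forall>k < length S. \<not> viable s i v j lam D (S ! k)) \<and> S' = S @ [new_vm s i v j lam D])"

inductive place_all ::
  "('n, 'v) sys \<Rightarrow> real \<Rightarrow> 'v req \<Rightarrow> 'n \<Rightarrow> ('n, 'v) vm list \<Rightarrow> 'v list
     \<Rightarrow> ('n, 'v) vm list \<Rightarrow> bool"
  for s eps r i where
  nil: "place_all s eps r i S [] S"
| cons: "in_range s eps j (Drv s r v) \<Longrightarrow>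
         place_job s S i v j (load r) (Drv s r v) S' \<Longrightarrow>
         place_all s eps r i S' vs S'' \<Longrightarrow>
         place_all s eps r i S (v # vs) S''"

definition handle ::
  "('n, 'v) sys \<Rightarrow> real \<Rightarrow> 'v req \<Rightarrow> ('n, 'v) vm list \<Rightarrow> ('n, 'v) vm list \<Rightarrow> bool" where
  "handle s eps r S S' \<longleftrightarrow>
     feasible_layers s r \<noteq> {} \<and>
     (\<exists>i vs. i \<in> nodes s \<and> layer s i = lstar s r \<and> distinct vs \<and> set vs = vnfs r \<and>
        place_all s eps r i S vs S')"

text \<open>States reachable after the first n requests of the sequence req (all requests
  have infinite duration, so no job ever leaves).\<close>

inductive reach ::
  "('n, 'v) sys \<Rightarrow> real \<Rightarrow> (nat \<Rightarrow> 'v req) \<Rightarrow> nat \<Rightarrow> ('n, 'v) vm list \<Rightarrow> bool"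
  for s eps req where
  init: "reach s eps req 0 []"
| step: "reach s eps req n S \<Longrightarrow> handle s eps (req n) S S' \<Longrightarrow> reach s eps req (Suc n) S'"

definition vms_of :: "('n, 'v) vm list \<Rightarrow> 'n \<Rightarrow> 'v \<Rightarrow> nat \<Rightarrow> ('n, 'v) vm list" where
  "vms_of S i v j = filter (\<lambda>b. vm_node b = i \<and> vm_vnf b = v \<and> vm_range b = j) S"

definition Lam :: "('n, 'v) vm list \<Rightarrow> 'n \<Rightarrow> 'v \<Rightarrow> nat \<Rightarrow> real" where
  "Lam S i v j = sum_list (map vm_load (vms_of S i v j))"

end

theory Submission
  imports Defs
begin

text \<open>Loads of VMs never decrease, and a VM for a job of load \<open>\<lambda>\<close> in range \<open>L\<^sub>j\<close> is opened
  only when no VM of the same node, VNF and range is viable.  Every budget in \<open>L\<^sub>j\<close> is at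
  least \<open>1/(mubar - c)\<close>, where \<open>c = \<lambda>\<^sub>m\<^sub>i\<^sub>n(1+\<epsilon>)\<^sup>j\<close>; since \<open>\<theta> \<le> 1\<close>, a VM \<open>b\<close> with
  \<open>\<Lambda>(b) + \<lambda> \<le> c\<close> would have been viable.  Hence any two VMs of one class carry total load
  more than \<open>c\<close>; at most one of them has load \<open>\<le> c/2\<close>, so \<open>N\<close> such VMs carry at least
  \<open>(N - 1) c/2\<close>.\<close>

lemma sorted_wrt_list_all2:
  assumes "list_all2 G xs ys" "sorted_wrt R xs"
    and "\<And>x y x' y'. R x y \<Longrightarrow> G x x' \<Longrightarrow> G y y' \<Longrightarrow> R x' y'"
  shows "sorted_wrt R ys"
  using assms(1,2)
proof (induction rule: list_all2_induct)
  case (Cons x xs y ys)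
  have "R y y'" if "y' \<in> set ys" for y'
  proof -
    obtain x' where "x' \<in> set xs" "G x' y'"
      using \<open>y' \<in> set ys\<close> Cons.hyps(2) by (metis list_all2_conv_all_nth in_set_conv_nth nth_mem)
    thus ?thesis using Cons.prems Cons.hyps(1) assms(3) by auto
  qed
  thus ?case using Cons by simp
qed simp

lemma length_le_of_sorted_wrt_sum_gt:
  fixes xs :: "real list"
  assumes sum_gt: "sorted_wrt (\<lambda>x y. c < x + y) xs" and nonneg: "\<forall>x\<in>set xs. 0 \<le> x" and "0 < c"
  shows "real (length xs) \<le> 2 * sum_list xs / c + 1"
proof -
  define small where "small = filter (\<lambda>x. x \<le> c / 2) xs"
  define large where "large = filter (\<lambda>x. \<not> x \<le> c / 2) xs"
  have "length small \<le> 1"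
  proof (rule ccontr)
    assume "\<not> length small \<le> 1"
    then obtain x y zs where small: "small = x # y # zs"
      by (metis One_nat_def le0 length_Cons list.exhaust list.size(3) not_less_eq_eq)
    have "sorted_wrt (\<lambda>x y. c < x + y) small"
      unfolding small_def using sum_gt by (rule sorted_wrt_filter)
    moreover have "x \<le> c / 2" "y \<le> c / 2"
      using small unfolding small_def by (metis filter_eq_ConsD)+
    ultimately show False using small by auto
  qed
  have "real (length large) * (c / 2) = (\<Sum>x\<leftarrow>large. c / 2)"
    by (simp add: sum_list_triv)
  also have "\<dots> \<le> sum_list large"
    using sum_list_mono[of large "\<lambda>_. c / 2" id] by (simp add: large_def)
  also have "\<dots> = (\<Sum>x\<leftarrow>xs. if \<not> x \<le> c / 2 then x else 0)"
    unfolding large_def using sum_list_map_filter'[of "\<lambda>x. x" "\<lambda>x. \<not> x \<le> c / 2" xs] by simp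
  also have "\<dots> \<le> sum_list xs"
    using sum_list_mono[of xs "\<lambda>x. if \<not> x \<le> c / 2 then x else 0" id] nonneg by simp
  finally have "real (length large) \<le> 2 * sum_list xs / c"
    using \<open>0 < c\<close> by (simp add: field_simps)
  moreover have "length xs \<le> length large + 1"
    using \<open>length small \<le> 1\<close> sum_length_filter_compl[of "\<lambda>x. x \<le> c / 2" xs]
    unfolding small_def large_def by linarith
  ultimately show ?thesis by linarith
qed

definition vm_class :: "('n, 'v) vm \<Rightarrow> 'n \<times> 'v \<times> nat" where
  "vm_class b = (vm_node b, vm_vnf b, vm_range b)"

lemma vms_of_eq_filter_class: "vms_of S i v j = filter (\<lambda>b. vm_class b = (i, v, j)) S"
  by (simp add: vms_of_def vm_class_def)

lemma add_job_simps [simp]: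
  "vm_class (add_job s lam D b) = vm_class b"
  "vm_range (add_job s lam D b) = vm_range b"
  "vm_jobs (add_job s lam D b) = vm_jobs b @ [(lam, D)]"
  "vm_load (add_job s lam D b) = vm_load b + lam"
  by (simp_all add: add_job_def vm_class_def vm_load_def Let_def)

lemma new_vm_simps [simp]:
  "vm_class (new_vm s i v j lam D) = (i, v, j)"
  "vm_range (new_vm s i v j lam D) = j"
  "vm_jobs (new_vm s i v j lam D) = [(lam, D)]"
  "vm_load (new_vm s i v j lam D) = lam"
  by (simp_all add: new_vm_def vm_class_def vm_load_def)

definition range_min_load :: "('n, 'v) sys \<Rightarrow> real \<Rightarrow> nat \<Rightarrow> real" where
  "range_min_load s eps j = lmin s * (1 + eps) ^ j"

lemma in_range_imp_latency_le:
  assumes "in_range s eps j D" "0 \<le> lmin s" "0 \<le> eps"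
  shows "range_min_load s eps j < mubar s" "1 / (mubar s - range_min_load s eps j) \<le> D"
proof -
  have "lmin s * (1 + eps) ^ j \<le> lmin s * (1 + eps) ^ (j + 1)"
    using assms(2,3) by (intro mult_left_mono power_increasing) auto
  thus "range_min_load s eps j < mubar s"
    using assms(1) unfolding in_range_def range_min_load_def by linarith
  show "1 / (mubar s - range_min_load s eps j) \<le> D"
    using assms(1) unfolding in_range_def range_min_load_def by (cases "j = 0") auto
qed

definition valid_jobs :: "('n, 'v) sys \<Rightarrow> real \<Rightarrow> ('n, 'v) vm \<Rightarrow> bool" where
  "valid_jobs s eps b \<longleftrightarrow> (\<forall>(l, D)\<in>set (vm_jobs b). 0 \<le> l \<and> in_range s eps (vm_range b) D)"

lemma valid_jobs_imp_load_nonneg: "valid_jobs s eps b \<Longrightarrow> 0 \<le> vm_load b"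
  unfolding valid_jobs_def vm_load_def by (rule sum_list_nonneg) auto

lemma viable_if_load_le_range_min_load:
  assumes in_class: "vm_class b = (i, v, j)" and jobs: "valid_jobs s eps b"
    and D: "in_range s eps j D"
    and cplx: "0 < cplx s v" "cplx s v \<le> 1"
    and "0 \<le> lmin s" "0 \<le> eps" "0 \<le> lam"
    and load_le: "vm_load b + lam \<le> range_min_load s eps j"
  shows "viable s i v j lam D b"
proof -
  let ?c = "range_min_load s eps j" and ?x = "cplx s v * (vm_load b + lam)"
  have "0 \<le> vm_load b + lam" using jobs \<open>0 \<le> lam\<close> by (simp add: valid_jobs_imp_load_nonneg)
  hence "?x \<le> ?c"
    using mult_left_le_one_le[of "vm_load b + lam" "cplx s v"] cplx load_le by linarith
  moreover have "?c < mubar s" using in_range_imp_latency_le(1)[OF D] assms by simp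
  ultimately have pos: "0 < mubar s - ?x" and le: "1 / (mubar s - ?x) \<le> 1 / (mubar s - ?c)"
    by (auto intro!: divide_left_mono mult_pos_pos)
  have "1 / (mubar s - ?x) \<le> D'" if "in_range s eps j D'" for D'
    using le in_range_imp_latency_le(2)[OF that] assms by linarith
  thus ?thesis
    using in_class jobs D pos unfolding viable_def valid_jobs_def vm_class_def by fastforce
qed

definition pair_load_exceeds :: "('n, 'v) sys \<Rightarrow> real \<Rightarrow> ('n, 'v) vm \<Rightarrow> ('n, 'v) vm \<Rightarrow> bool" where
  "pair_load_exceeds s eps b b' \<longleftrightarrow>
     (vm_class b = vm_class b' \<longrightarrow> range_min_load s eps (vm_range b') < vm_load b + vm_load b')"

definition placement_invariant :: "('n, 'v) sys \<Rightarrow> real \<Rightarrow> ('n, 'v) vm list \<Rightarrow> bool" where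
  "placement_invariant s eps S \<longleftrightarrow>
     (\<forall>b\<in>set S. valid_jobs s eps b) \<and> sorted_wrt (pair_load_exceeds s eps) S"

lemma placement_invariant_add_job:
  assumes inv: "placement_invariant s eps S" and k: "k < length S"
    and "vm_range (S ! k) = j" "in_range s eps j D" "0 \<le> lam"
  shows "placement_invariant s eps (S[k := add_job s lam D (S ! k)])"
proof -
  let ?grows = "\<lambda>b b'. vm_class b' = vm_class b \<and> vm_range b' = vm_range b \<and> vm_load b \<le> vm_load b'"
  have "list_all2 ?grows S (S[k := add_job s lam D (S ! k)])"
    using k \<open>0 \<le> lam\<close> by (auto simp: list_all2_conv_all_nth nth_list_update)
  hence "sorted_wrt (pair_load_exceeds s eps) (S[k := add_job s lam D (S ! k)])"
    using inv unfolding placement_invariant_def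
    by (rule sorted_wrt_list_all2[OF _ conjunct2]) (auto simp: pair_load_exceeds_def)
  moreover have "valid_jobs s eps (add_job s lam D (S ! k))"
    using inv k assms(3-5) by (auto simp: placement_invariant_def valid_jobs_def)
  ultimately show ?thesis
    using inv by (auto simp: placement_invariant_def dest: set_update_subset_insert[THEN subsetD])
qed

lemma placement_invariant_new_vm:
  assumes inv: "placement_invariant s eps S"
    and none_viable: "\<forall>k<length S. \<not> viable s i v j lam D (S ! k)"
    and "in_range s eps j D" "0 < cplx s v" "cplx s v \<le> 1" "0 \<le> lmin s" "0 \<le> eps" "0 \<le> lam"
  shows "placement_invariant s eps (S @ [new_vm s i v j lam D])"
proof -
  have "pair_load_exceeds s eps b (new_vm s i v j lam D)" if "b \<in> set S" for b
  proof -
    have "\<not> viable s i v j lam D b" using none_viable \<open>b \<in> set S\<close> by (metis in_set_conv_nth)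
    moreover have "valid_jobs s eps b" using inv \<open>b \<in> set S\<close> by (simp add: placement_invariant_def)
    ultimately have "vm_class b = (i, v, j) \<Longrightarrow> range_min_load s eps j < vm_load b + lam"
      using viable_if_load_le_range_min_load[of b i v j s eps D lam] assms(3-) by fastforce
    thus ?thesis by (simp add: pair_load_exceeds_def)
  qed
  moreover have "valid_jobs s eps (new_vm s i v j lam D)"
    using assms(3,8) by (simp add: valid_jobs_def)
  ultimately show ?thesis
    using inv by (auto simp: placement_invariant_def sorted_wrt_append)
qed

lemma placement_invariant_place_job:
  assumes "placement_invariant s eps S" "place_job s S i v j lam D S'"
    and "in_range s eps j D" "0 < cplx s v" "cplx s v \<le> 1" "0 \<le> lmin s" "0 \<le> eps" "0 \<le> lam"
  shows "placement_invariant s eps S'"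
  using assms(2) unfolding place_job_def
proof (elim disjE exE conjE)
  fix k assume "k < length S" "viable s i v j lam D (S ! k)" "S' = S[k := add_job s lam D (S ! k)]"
  thus ?thesis using placement_invariant_add_job assms by (metis viable_def)
next
  assume "\<forall>k<length S. \<not> viable s i v j lam D (S ! k)" "S' = S @ [new_vm s i v j lam D]"
  thus ?thesis using placement_invariant_new_vm assms by metis
qed

lemma placement_invariant_place_all:
  assumes "place_all s eps r i S vs S'" "placement_invariant s eps S"
    and "\<And>v. 0 < cplx s v \<and> cplx s v \<le> 1" "0 \<le> lmin s" "0 \<le> eps" "0 \<le> load r"
  shows "placement_invariant s eps S'"
  using assms(1,2)
proof (induction rule: place_all.induct)
  case (cons j v S S' vs S'')
  have "placement_invariant s eps S'"
    using placement_invariant_place_job[OF cons.prems cons.hyps(2,1)] assms(3-) by blast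
  thus ?case by (rule cons.IH)
qed

lemma placement_invariant_reach:
  assumes "reach s eps req n S"
    and "\<And>v. 0 < cplx s v \<and> cplx s v \<le> 1" "0 \<le> lmin s" "0 \<le> eps" "\<And>k. 0 \<le> load (req k)"
  shows "placement_invariant s eps S"
  using assms(1)
proof (induction rule: reach.induct)
  case init
  show ?case by (simp add: placement_invariant_def)
next
  case (step n S S')
  thus ?case using placement_invariant_place_all assms(2-) unfolding handle_def by metis
qed

theorem lemma4:
  fixes s :: "('n, 'v) sys" and eps :: real and req :: "nat \<Rightarrow> 'v req"
  assumes "finite (nodes s)"
    and "strict_mono (fwd s)"
    and "\<And>v. 0 < cplx s v \<and> cplx s v \<le> 1"
    and "0 < mubar s"
    and "0 < eps"
    and "\<And>k. finite (vnfs (req k))"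
    and "\<And>k. lmin s \<le> load (req k)"
    and "lmin s = (INF k. load (req k))"
    and "0 < lmin s"
    and "reach s eps req n S"
  shows "real (length (vms_of S i v j)) \<le> 2 * Lam S i v j / (lmin s * (1 + eps) ^ j) + 1"
proof -
  have inv: "placement_invariant s eps S"
    using placement_invariant_reach[OF assms(10,3)] assms(5,7,9) by (meson less_le_trans less_imp_le)
  let ?F = "vms_of S i v j"
  have "sorted_wrt (pair_load_exceeds s eps) ?F"
    using inv by (simp add: placement_invariant_def vms_of_eq_filter_class sorted_wrt_filter)
  hence "sorted_wrt (\<lambda>x y. range_min_load s eps j < x + y) (map vm_load ?F)"
    by (auto simp: sorted_wrt_map vms_of_eq_filter_class pair_load_exceeds_def vm_class_def
             elim: sorted_wrt_mono_rel[rotated])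
  moreover have "\<forall>x\<in>set (map vm_load ?F). 0 \<le> x"
    using inv by (auto simp: placement_invariant_def vms_of_def valid_jobs_imp_load_nonneg)
  moreover have "0 < range_min_load s eps j"
    using assms(5,9) by (simp add: range_min_load_def)
  ultimately have "real (length (map vm_load ?F))
      \<le> 2 * sum_list (map vm_load ?F) / range_min_load s eps j + 1"
    by (rule length_le_of_sorted_wrt_sum_gt)
  thus ?thesis by (simp add: Lam_def range_min_load_def)
qed

end
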